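(* Let $K$ be such that $A+BK$ is Schur stable, and let $\mathcal{S}=\{\sigma\in\mathbf{C}: A+(1-\sigma)LC \text{ is Schur stable}\}$ be the consensus region. Let $\mathcal{G}\in\Gamma_N$ with eigenvalues $1,\lambda_2,\dots,\lambda_N$ of $\mathcal{D}$, where $|\lambda_i|<1$ for $i\ge2$. If $\lambda_i\in\mathcal{S}$ for all $i=2,\dots,N$, then the agents reach consensus under the protocol: for all initial conditions, $\|x_i(k)-x_j(k)\|\to0$ for all $i,j$.
   Context: Agents: $x_i(k+1)=Ax_i(k)+Bu_i(k)$, $y_i=Cx_i$, $i=1,\dots,N$, with $A\in\mathbf{R}^{n\times n}$, $B\in\mathbf{R}^{n\times p}$, $C\in\mathbf{R}^{q\times n}$. For a directed graph $\mathcal{G}$ on nodes $\{1,\dots,N\}$, its row-stochastic matrix $\mathcal{D}=(d_{ij})$ satisfies $d_{ii}>0$, $d_{ij}>0$ for $j\ne i$ iff $(j,i)$ is an edge, $d_{ij}=0$ otherwise, $\sum_jd_{ij}=1$. $\Gamma_N$ is the set of directed graphs on $N$ nodes containing a directed spanning tree. Protocol with $K\in\mathbf{R}^{p\times n}$, $L\in\mathbf{R}^{n\times q}$: $\zeta_i=\sum_j d_{ij}(y_i-y_j)$, $v_i(k+1)=(A+BK)v_i(k)+L\big(\sum_j d_{ij}C(v_i-v_j)-\zeta_i\big)$, $u_i=Kv_i$. Schur stable: all eigenvalues of modulus $<1$. *)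

theory Defs
  imports Complex_Main "Jordan_Normal_Form.Char_Poly"
begin

definition schur_stable :: "complex mat \<Rightarrow> bool" where
  "schur_stable M \<longleftrightarrow> M \<in> carrier_mat (dim_row M) (dim_row M) \<and>
     (\<forall>z. eigenvalue M z \<longrightarrow> cmod z < 1)"

abbreviation cmat :: "real mat \<Rightarrow> complex mat" where
  "cmat M \<equiv> map_mat complex_of_real M"

(* row-stochastic matrix of a digraph on nodes 0..N-1 (agents 1..N of the paper) *)
definition row_stochastic :: "nat \<Rightarrow> real mat \<Rightarrow> bool" where
  "row_stochastic N D \<longleftrightarrow> D \<in> carrier_mat N N \<and>
     (\<forall>i<N. D $$ (i,i) > 0) \<and> (\<forall>i<N. \<forall>j<N. D $$ (i,j) \<ge> 0) \<and>
     (\<forall>i<N. (\<Sum>j<N. D $$ (i,j)) = 1)"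

definition graph_edges :: "nat \<Rightarrow> real mat \<Rightarrow> (nat \<times> nat) set" where
  "graph_edges N D = {(j,i). i < N \<and> j < N \<and> j \<noteq> i \<and> D $$ (i,j) > 0}"

definition has_spanning_tree :: "nat \<Rightarrow> real mat \<Rightarrow> bool" where
  "has_spanning_tree N D \<longleftrightarrow> (\<exists>r<N. \<forall>i<N. (r,i) \<in> (graph_edges N D)\<^sup>*)"

definition consensus_region :: "real mat \<Rightarrow> real mat \<Rightarrow> real mat \<Rightarrow> complex set" where
  "consensus_region A L C = {\<sigma>. schur_stable (cmat A + (1 - \<sigma>) \<cdot>\<^sub>m (cmat L * cmat C))}"

definition vsum :: "nat \<Rightarrow> nat \<Rightarrow> (nat \<Rightarrow> real vec) \<Rightarrow> real vec" where
  "vsum d N f = vec d (\<lambda>l. \<Sum>j<N. f j $ l)"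

definition vnorm :: "real vec \<Rightarrow> real" where
  "vnorm x = sqrt (\<Sum>l<dim_vec x. (x $ l)\<^sup>2)"

end

(* The observer errors e_i = v_i - x_i evolve on their own:
   e_i(k+1) = A e_i + LC sum_j d_ij (e_i - e_j).  Triangularizing D = P T P^-1 (Schur) and passing
   to the modal errors f_m = sum_i (P^-1)_mi e_i turns this into a cascade
   f_m(k+1) = (A + (1 - T_mm) LC) f_m - LC sum_{l>m} T_ml f_l, whose blocks m >= 1 are Schur stable
   because T_mm = lambda_m lies in the consensus region.  A Schur stable system driven by a vanishing
   input has a vanishing state, so by backward induction f_m -> 0 for all m >= 1.  Since D 1 = 1 and
   the eigenvalue 1 is simple, the first column of P is constant, hence e_i - e_j -> 0.  Finally
   x_i - x_j obeys (x_i - x_j)(k+1) = (A + BK)(x_i - x_j) + BK (e_i - e_j), which is again stable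
   with vanishing input. *)

theory Submission
  imports Defs "Jordan_Normal_Form.Spectral_Radius" "Jordan_Normal_Form.Schur_Decomposition"
begin

lemma nonneg_recurrence_tendsto_zero:
  fixes z b :: "nat \<Rightarrow> real" and \<rho> :: real
  assumes "0 \<le> \<rho>" and "\<rho> < 1" and z_nonneg: "\<And>k. 0 \<le> z k"
    and rec: "\<And>k. z (Suc k) \<le> \<rho> * z k + b k" and "b \<longlonglongrightarrow> 0"
  shows "z \<longlonglongrightarrow> 0"
proof (rule LIMSEQ_I)
  fix \<epsilon> :: real assume "0 < \<epsilon>"
  then have "0 < \<epsilon> * (1 - \<rho>) / 2" using \<open>\<rho> < 1\<close> by simp
  with \<open>b \<longlonglongrightarrow> 0\<close> obtain J where J: "\<And>k. k \<ge> J \<Longrightarrow> \<bar>b k\<bar> < \<epsilon> * (1 - \<rho>) / 2"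
    by (metis LIMSEQ_D diff_zero real_norm_def)
  have tail: "z (J + t) \<le> \<rho> ^ t * z J + \<epsilon> / 2" for t
  proof (induction t)
    case 0 then show ?case using \<open>0 < \<epsilon>\<close> by simp
  next
    case (Suc t)
    have "z (J + Suc t) \<le> \<rho> * z (J + t) + b (J + t)" using rec by simp
    also have "\<dots> \<le> \<rho> * (\<rho> ^ t * z J + \<epsilon> / 2) + \<epsilon> * (1 - \<rho>) / 2"
      using Suc.IH J[of "J + t"] \<open>0 \<le> \<rho>\<close> by (intro add_mono mult_left_mono) auto
    also have "\<dots> = \<rho> ^ Suc t * z J + \<epsilon> / 2" by (simp add: field_simps)
    finally show ?case .
  qed
  have "(\<lambda>t. \<rho> ^ t * z J) \<longlonglongrightarrow> 0"
    using assms(1,2) by (intro tendsto_mult_left_zero LIMSEQ_power_zero) auto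
  then obtain T where T: "\<And>t. t \<ge> T \<Longrightarrow> \<rho> ^ t * z J < \<epsilon> / 2"
    using \<open>0 < \<epsilon>\<close> by (metis LIMSEQ_D abs_less_iff diff_zero half_gt_zero real_norm_def)
  show "\<exists>k0. \<forall>k\<ge>k0. norm (z k - 0) < \<epsilon>"
  proof (intro exI allI impI)
    fix k assume "J + T \<le> k"
    then have "z k \<le> \<rho> ^ (k - J) * z J + \<epsilon> / 2" and "\<rho> ^ (k - J) * z J < \<epsilon> / 2"
      using tail[of "k - J"] T[of "k - J"] by auto
    then show "norm (z k - 0) < \<epsilon>" using z_nonneg[of k] by simp
  qed
qed

lemma geometric_convolution_tendsto_zero:
  fixes b :: "nat \<Rightarrow> real"
  assumes "0 \<le> r" "r < 1" "\<And>k. 0 \<le> b k" "b \<longlonglongrightarrow> 0"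
  shows "(\<lambda>k. \<Sum>s<k. r ^ (k - 1 - s) * b s) \<longlonglongrightarrow> 0"
proof (rule nonneg_recurrence_tendsto_zero[OF assms(1,2) _ _ assms(4)])
  show "0 \<le> (\<Sum>s<k. r ^ (k - 1 - s) * b s)" for k
    using assms by (simp add: sum_nonneg)
  show "(\<Sum>s<Suc k. r ^ (Suc k - 1 - s) * b s) \<le> r * (\<Sum>s<k. r ^ (k - 1 - s) * b s) + b k" for k
  proof -
    have "r * (\<Sum>s<k. r ^ (k - 1 - s) * b s) = (\<Sum>s<k. r ^ (k - s) * b s)"
      unfolding sum_distrib_left
      by (intro sum.cong refl) (simp add: Suc_diff_Suc mult.assoc[symmetric] power_Suc[symmetric])
    then show ?thesis by simp
  qed
qed

lemma smult_pow_mat: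
  fixes M :: "'a::comm_ring_1 mat"
  assumes "M \<in> carrier_mat n n"
  shows "(a \<cdot>\<^sub>m M) ^\<^sub>m k = a ^ k \<cdot>\<^sub>m M ^\<^sub>m k"
proof (induction k)
  case (Suc k)
  have "a ^ k \<cdot>\<^sub>m M ^\<^sub>m k * (a \<cdot>\<^sub>m M) = a ^ k \<cdot>\<^sub>m (a \<cdot>\<^sub>m (M ^\<^sub>m k * M))"
    using assms by (subst mult_smult_assoc_mat[of _ n n _ n], simp_all add: mult_smult_distrib[of _ n n _ n])
  also have "\<dots> = a ^ Suc k \<cdot>\<^sub>m (M ^\<^sub>m k * M)"
    by (rule eq_matI) auto
  finally show ?case using Suc by simp
qed (use assms in \<open>auto intro!: eq_matI\<close>)

lemma eigenvalue_smult_mat: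
  fixes M :: "'a::field mat"
  assumes "M \<in> carrier_mat n n" and "eigenvalue M z"
  shows "eigenvalue (a \<cdot>\<^sub>m M) (a * z)"
proof -
  obtain v where v: "v \<in> carrier_vec n" "v \<noteq> 0\<^sub>v n" "M *\<^sub>v v = z \<cdot>\<^sub>v v"
    using assms unfolding eigenvalue_def eigenvector_def by auto
  have "(a \<cdot>\<^sub>m M) *\<^sub>v v = a \<cdot>\<^sub>v (M *\<^sub>v v)"
    using assms(1) v(1) by (intro eq_vecI) auto
  with v assms(1) show ?thesis
    unfolding eigenvalue_def eigenvector_def by (auto simp: smult_smult_assoc)
qed

lemma schur_stable_spectral_radius_less_1:
  assumes "M \<in> carrier_mat n n" "0 < n" "schur_stable M"
  shows "spectral_radius M < 1"
  using spectral_radius_mem_max(1)[OF assms(1,2)] assms(3)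
  unfolding schur_stable_def spectrum_def by auto

lemma spectral_radius_smult_less_1:
  fixes M :: "complex mat"
  assumes M: "M \<in> carrier_mat n n" and n: "0 < n" and r: "0 < r" "spectral_radius M < r"
  shows "spectral_radius (complex_of_real (1 / r) \<cdot>\<^sub>m M) < 1"
proof -
  define M' where "M' = complex_of_real (1 / r) \<cdot>\<^sub>m M"
  have M': "M' \<in> carrier_mat n n" unfolding M'_def using M by simp
  obtain z where z: "eigenvalue M' z" "spectral_radius M' = cmod z"
    using spectral_radius_mem_max(1)[OF M' n] unfolding spectrum_def by auto
  have "complex_of_real r \<cdot>\<^sub>m M' = M"
    unfolding M'_def using r(1) by (intro eq_matI) (auto simp: of_real_divide)
  then have "eigenvalue M (complex_of_real r * z)"
    using eigenvalue_smult_mat[OF M' z(1)] by metis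
  then have "cmod (complex_of_real r * z) \<le> spectral_radius M"
    using spectral_radius_mem_max(2)[OF M n] unfolding spectrum_def by auto
  then have "r * cmod z \<le> spectral_radius M"
    using r(1) by (simp add: norm_mult)
  then have "r * cmod z < r * 1"
    using r(2) by simp
  then show ?thesis using z(2) r(1) by (simp add: M'_def)
qed

lemma schur_stable_pow_norm_bound:
  fixes M :: "complex mat"
  assumes M: "M \<in> carrier_mat n n" and stable: "schur_stable M"
  obtains c r where "0 \<le> c" "0 < r" "r < 1" "\<And>k. norm_bound (M ^\<^sub>m k) (c * r ^ k)"
proof (cases "n = 0")
  case True
  then show ?thesis using M by (intro that[of 0 "1/2"]) (auto simp: norm_bound_def)
next
  case False
  then have n: "0 < n" by simp
  define r where "r = (1 + spectral_radius M) / 2"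
  have "0 \<le> spectral_radius M"
    using spectral_radius_mem_max(1)[OF M n] by auto
  then have r: "0 < r" "r < 1" "spectral_radius M < r"
    using schur_stable_spectral_radius_less_1[OF M n stable] unfolding r_def by auto
  define M' where "M' = complex_of_real (1 / r) \<cdot>\<^sub>m M"
  have M': "M' \<in> carrier_mat n n" unfolding M'_def using M by simp
  \<comment> \<open>the powers of the rescaled matrix stay bounded, which gives the decay rate r for M\<close>
  have "spectral_radius M' < 1"
    unfolding M'_def using spectral_radius_smult_less_1[OF M n r(1,3)] .
  then obtain c where c: "\<And>k. norm_bound (M' ^\<^sub>m k) c"
    using spectral_radius_jnf_norm_bound_less_1_upper_triangular[OF M'] by auto
  show ?thesis
  proof (rule that[of c r])
    have "norm ((M' ^\<^sub>m 0) $$ (0, 0)) \<le> c"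
      using c[of 0] M' n unfolding norm_bound_def by (elim allE[of _ 0]) auto
    then show "0 \<le> c" using norm_ge_zero order_trans by blast
    show "norm_bound (M ^\<^sub>m k) (c * r ^ k)" for k
    proof (rule norm_boundI)
      fix i j assume "i < dim_row (M ^\<^sub>m k)" "j < dim_col (M ^\<^sub>m k)"
      with M have ij: "i < n" "j < n" by (auto split: if_splits)
      have "M' ^\<^sub>m k = complex_of_real ((1 / r) ^ k) \<cdot>\<^sub>m M ^\<^sub>m k"
        unfolding M'_def smult_pow_mat[OF M] by simp
      then have "(1 / r) ^ k * norm ((M ^\<^sub>m k) $$ (i, j)) \<le> c"
        using c[of k] ij M r(1) unfolding norm_bound_def
        by (auto simp: carrier_matD norm_mult norm_power norm_divide)
      then show "norm ((M ^\<^sub>m k) $$ (i, j)) \<le> c * r ^ k"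
        using r(1) by (simp add: field_simps power_divide)
    qed
  qed (use r in auto)
qed

lemma index_mult_mat_vec_sum:
  "M \<in> carrier_mat n m \<Longrightarrow> v \<in> carrier_vec m \<Longrightarrow> l < n \<Longrightarrow>
    (M *\<^sub>v v) $ l = (\<Sum>j<m. M $$ (l, j) * v $ j)"
  by (simp add: scalar_prod_def atLeast0LessThan)

lemma norm_bound_mult_mat_vec:
  fixes X :: "'a::real_normed_field mat"
  assumes "X \<in> carrier_mat n n" "v \<in> carrier_vec n" "norm_bound X a" "l < n"
  shows "norm ((X *\<^sub>v v) $ l) \<le> a * (\<Sum>j<n. norm (v $ j))"
proof -
  have "norm ((X *\<^sub>v v) $ l) \<le> (\<Sum>j<n. norm (X $$ (l, j) * v $ j))"
    unfolding index_mult_mat_vec_sum[OF assms(1,2,4)] by (rule norm_sum)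
  also have "\<dots> \<le> (\<Sum>j<n. a * norm (v $ j))"
    using assms unfolding norm_bound_def
    by (intro sum_mono) (auto simp: norm_mult intro!: mult_right_mono)
  finally show ?thesis by (simp add: sum_distrib_left)
qed

lemma linear_recurrence_closed_form:
  fixes M :: "'a::comm_ring_1 mat"
  assumes M: "M \<in> carrier_mat n n"
    and y: "\<And>k. y k \<in> carrier_vec n" and u: "\<And>k. u k \<in> carrier_vec n"
    and rec: "\<And>k. y (Suc k) = M *\<^sub>v y k + u k" and l: "l < n"
  shows "y k $ l = (M ^\<^sub>m k *\<^sub>v y 0) $ l + (\<Sum>s<k. (M ^\<^sub>m (k - 1 - s) *\<^sub>v u s) $ l)"
  using y u rec
proof (induction k arbitrary: y u)
  case 0
  then show ?case using M l by simp
next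
  case (Suc k)
  have "y (Suc k) $ l = (M ^\<^sub>m k *\<^sub>v y (Suc 0)) $ l + (\<Sum>s<k. (M ^\<^sub>m (k - 1 - s) *\<^sub>v u (Suc s)) $ l)"
    by (rule Suc.IH[of "\<lambda>k. y (Suc k)" "\<lambda>k. u (Suc k)"])
      (use Suc.prems in blast)+
  moreover have "M ^\<^sub>m k *\<^sub>v y (Suc 0) = M ^\<^sub>m Suc k *\<^sub>v y 0 + M ^\<^sub>m k *\<^sub>v u 0"
    using M Suc.prems(1,2) Suc.prems(3)[of 0]
    by (simp add: mult_add_distrib_mat_vec[of _ n n] assoc_mult_mat_vec[of _ n n _ n])
  ultimately show ?case
    using M l Suc.prems(1,2) by (simp add: sum.lessThan_Suc_shift del: sum.lessThan_Suc)
qed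

lemma schur_stable_input_to_state:
  fixes M :: "complex mat"
  assumes M: "M \<in> carrier_mat n n" and stable: "schur_stable M"
    and y: "\<And>k. y k \<in> carrier_vec n" and u: "\<And>k. u k \<in> carrier_vec n"
    and rec: "\<And>k. y (Suc k) = M *\<^sub>v y k + u k"
    and u_lim: "\<And>j. j < n \<Longrightarrow> (\<lambda>k. u k $ j) \<longlonglongrightarrow> 0" and l: "l < n"
  shows "(\<lambda>k. y k $ l) \<longlonglongrightarrow> 0"
proof -
  obtain c r where c: "0 \<le> c" and r: "0 < r" "r < 1"
    and pow_bound: "\<And>k. norm_bound (M ^\<^sub>m k) (c * r ^ k)"
    using schur_stable_pow_norm_bound[OF M stable] by blast
  define b where "b k = (\<Sum>j<n. norm (u k $ j))" for k
  define Y0 where "Y0 = (\<Sum>j<n. norm (y 0 $ j))"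
  have bound: "norm (y k $ l) \<le> c * r ^ k * Y0 + c * (\<Sum>s<k. r ^ (k - 1 - s) * b s)" for k
  proof -
    have "norm (y k $ l)
        \<le> norm ((M ^\<^sub>m k *\<^sub>v y 0) $ l) + (\<Sum>s<k. norm ((M ^\<^sub>m (k - 1 - s) *\<^sub>v u s) $ l))"
      unfolding linear_recurrence_closed_form[where y = y and u = u, OF M y u rec l]
      by (rule order_trans[OF norm_triangle_ineq add_left_mono[OF norm_sum]])
    also have "\<dots> \<le> c * r ^ k * Y0 + (\<Sum>s<k. c * r ^ (k - 1 - s) * b s)"
      unfolding Y0_def b_def using M y u pow_bound l
      by (intro add_mono sum_mono norm_bound_mult_mat_vec) auto
    finally show ?thesis by (simp add: sum_distrib_left mult.assoc)
  qed
  have lim: "(\<lambda>k. c * r ^ k * Y0 + c * (\<Sum>s<k. r ^ (k - 1 - s) * b s)) \<longlonglongrightarrow> 0"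
  proof -
    have "(\<lambda>k. \<Sum>j<n. norm (u k $ j)) \<longlonglongrightarrow> 0"
      by (intro tendsto_null_sum tendsto_norm_zero u_lim) auto
    then have "(\<lambda>k. \<Sum>s<k. r ^ (k - 1 - s) * b s) \<longlonglongrightarrow> 0"
      using r by (intro geometric_convolution_tendsto_zero) (auto simp: b_def sum_nonneg)
    moreover have "(\<lambda>k. r ^ k) \<longlonglongrightarrow> 0" using r by (intro LIMSEQ_power_zero) auto
    ultimately show ?thesis
      by (intro tendsto_add_zero tendsto_mult_right_zero tendsto_mult_left_zero)
  qed
  have "(\<lambda>k. norm (y k $ l)) \<longlonglongrightarrow> 0"
    by (rule tendsto_sandwich[OF _ _ tendsto_const lim])
      (use bound in \<open>simp_all only: norm_ge_zero always_eventually eventually_True\<close>)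
  then show ?thesis by (rule tendsto_norm_zero_cancel)
qed

lemma schur_stable_input_to_state_real:
  fixes M :: "real mat"
  assumes M: "M \<in> carrier_mat n n" and stable: "schur_stable (cmat M)"
    and y: "\<And>k. y k \<in> carrier_vec n" and u: "\<And>k. u k \<in> carrier_vec n"
    and rec: "\<And>k. y (Suc k) = M *\<^sub>v y k + u k"
    and u_lim: "\<And>j. j < n \<Longrightarrow> (\<lambda>k. u k $ j) \<longlonglongrightarrow> 0" and l: "l < n"
  shows "(\<lambda>k. y k $ l) \<longlonglongrightarrow> 0"
proof -
  have "(\<lambda>k. map_vec complex_of_real (y k) $ l) \<longlonglongrightarrow> 0"
  proof (rule schur_stable_input_to_state[OF _ stable])
    show "map_vec complex_of_real (y (Suc k))
        = cmat M *\<^sub>v map_vec complex_of_real (y k) + map_vec complex_of_real (u k)" for k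
      unfolding of_real_hom.mult_mat_vec_hom[OF M y, symmetric] rec
      using carrier_matD[OF M] carrier_vecD[OF u] by (intro eq_vecI) auto
    show "(\<lambda>k. map_vec complex_of_real (u k) $ j) \<longlonglongrightarrow> 0" if "j < n" for j
      using u_lim[OF that] carrier_vecD[OF u] that
      by (simp add: tendsto_of_real_iff[where c = 0, simplified])
  qed (use M y u l in auto)
  then show ?thesis
    using carrier_vecD[OF y] l by (simp add: tendsto_of_real_iff[where c = 0, simplified])
qed

lemma mult_mat_vec_tendsto_zero:
  fixes M :: "'a::real_normed_algebra mat"
  assumes "M \<in> carrier_mat n m" "\<And>k. w k \<in> carrier_vec m"
    and "\<And>j. j < m \<Longrightarrow> (\<lambda>k. w k $ j) \<longlonglongrightarrow> 0" and "l < n"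
  shows "(\<lambda>k. (M *\<^sub>v w k) $ l) \<longlonglongrightarrow> 0"
  unfolding index_mult_mat_vec_sum[OF assms(1,2,4)]
  using assms(3) by (intro tendsto_null_sum tendsto_mult_right_zero) auto

lemma vnorm_tendsto_zero:
  assumes "\<And>k. w k \<in> carrier_vec n" and "\<And>l. l < n \<Longrightarrow> (\<lambda>k. w k $ l) \<longlonglongrightarrow> 0"
  shows "(\<lambda>k. vnorm (w k)) \<longlonglongrightarrow> 0"
proof -
  have "(\<lambda>k. \<Sum>l<n. (w k $ l)\<^sup>2) \<longlonglongrightarrow> 0"
    using assms(2) by (intro tendsto_null_sum) (auto dest: tendsto_power[where n = 2])
  then have "(\<lambda>k. sqrt (\<Sum>l<n. (w k $ l)\<^sup>2)) \<longlonglongrightarrow> 0"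
    using tendsto_real_sqrt by fastforce
  then show ?thesis
    using carrier_vecD[OF assms(1)] by (simp add: vnorm_def)
qed

lemma plant_step_error_form:
  fixes A B K :: "real mat"
  assumes "A \<in> carrier_mat n n" "B \<in> carrier_mat n p" "K \<in> carrier_mat p n"
    and "x \<in> carrier_vec n" "v \<in> carrier_vec n"
  shows "A *\<^sub>v x + B *\<^sub>v (K *\<^sub>v v) = (A + B * K) *\<^sub>v x + (B * K) *\<^sub>v (v - x)"
  using assms
  by (intro eq_vecI) (auto simp: add_mult_distrib_mat_vec[of _ n n] mult_minus_distrib_mat_vec[of _ n n])

lemma state_difference_tendsto_zero:
  fixes A B K :: "real mat"
  assumes A: "A \<in> carrier_mat n n" and B: "B \<in> carrier_mat n p" and K: "K \<in> carrier_mat p n"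
    and stable: "schur_stable (cmat (A + B * K))"
    and carrier: "\<And>k. x k \<in> carrier_vec n" "\<And>k. x' k \<in> carrier_vec n"
      "\<And>k. v k \<in> carrier_vec n" "\<And>k. v' k \<in> carrier_vec n"
    and x_step: "\<And>k. x (Suc k) = A *\<^sub>v x k + B *\<^sub>v (K *\<^sub>v v k)"
    and x'_step: "\<And>k. x' (Suc k) = A *\<^sub>v x' k + B *\<^sub>v (K *\<^sub>v v' k)"
    and errors_agree: "\<And>t. t < n \<Longrightarrow> (\<lambda>k. (v k - x k) $ t - (v' k - x' k) $ t) \<longlonglongrightarrow> 0"
    and l: "l < n"
  shows "(\<lambda>k. (x k - x' k) $ l) \<longlonglongrightarrow> 0"
proof (rule schur_stable_input_to_state_real[OF _ stable])
  define \<epsilon> where "\<epsilon> k = (v k - x k) - (v' k - x' k)" for k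
  have BK: "B * K \<in> carrier_mat n n" using B K by simp
  show "x (Suc k) - x' (Suc k) = (A + B * K) *\<^sub>v (x k - x' k) + (B * K) *\<^sub>v \<epsilon> k" for k
    unfolding x_step x'_step plant_step_error_form[OF A B K carrier(1,3)]
      plant_step_error_form[OF A B K carrier(2,4)] \<epsilon>_def
    using A BK carrier
    by (intro eq_vecI) (auto simp: mult_minus_distrib_mat_vec[of _ n n])
  show "(\<lambda>k. ((B * K) *\<^sub>v \<epsilon> k) $ j) \<longlonglongrightarrow> 0" if "j < n" for j
  proof (rule mult_mat_vec_tendsto_zero[OF BK _ _ that])
    show "\<epsilon> k \<in> carrier_vec n" for k using carrier by (simp add: \<epsilon>_def)
    show "(\<lambda>k. \<epsilon> k $ t) \<longlonglongrightarrow> 0" if "t < n" for t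
      using errors_agree[OF that] carrier_vecD[OF carrier(1)] carrier_vecD[OF carrier(2)] that
      by (simp add: \<epsilon>_def)
  qed
qed (use A B K carrier l in auto)

lemma similar_upper_triangular:
  fixes D :: "'a::conjugatable_ordered_field mat"
  assumes D: "D \<in> carrier_mat N N" and char_poly: "char_poly D = (\<Prod>a\<leftarrow>es. [:- a, 1:])"
  obtains T P Q where "T \<in> carrier_mat N N" "P \<in> carrier_mat N N" "Q \<in> carrier_mat N N"
    "P * Q = 1\<^sub>m N" "Q * D = T * Q" "upper_triangular T" "diag_mat T = es"
proof -
  obtain T P Q where "schur_decomposition D es = (T, P, Q)"
    by (cases "schur_decomposition D es") auto
  from schur_decomposition[OF D char_poly this]
  have sim: "similar_mat_wit D T P Q" and "upper_triangular T" "diag_mat T = es" by auto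
  from sim D have T: "T \<in> carrier_mat N N" and P: "P \<in> carrier_mat N N" and Q: "Q \<in> carrier_mat N N"
    and "P * Q = 1\<^sub>m N" "Q * P = 1\<^sub>m N" "D = P * T * Q"
    unfolding similar_mat_wit_def Let_def by auto
  moreover have "Q * D = T * Q"
  proof -
    have "Q * (P * T * Q) = (Q * P) * T * Q"
      using T P Q by (simp add: assoc_mult_mat[of _ N N _ N _ N])
    then show ?thesis using \<open>D = P * T * Q\<close> \<open>Q * P = 1\<^sub>m N\<close> T Q by simp
  qed
  ultimately show ?thesis using that \<open>upper_triangular T\<close> \<open>diag_mat T = es\<close> by blast
qed

lemma sum_mult_of_real_sum:
  fixes c :: "'i \<Rightarrow> 'a::real_field"
  shows "(\<Sum>i\<in>I. c i * of_real (\<Sum>t\<in>J. a t * g i t))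
    = (\<Sum>t\<in>J. of_real (a t) * (\<Sum>i\<in>I. c i * of_real (g i t)))"
  unfolding of_real_sum of_real_mult sum_distrib_left by (subst sum.swap) (simp add: mult_ac)

locale stochastic_triangularization =
  fixes N :: nat and D :: "real mat" and T P Q :: "complex mat"
  assumes D: "D \<in> carrier_mat N N" and row_sum: "\<And>i. i < N \<Longrightarrow> (\<Sum>j<N. D $$ (i, j)) = 1"
    and T: "T \<in> carrier_mat N N" and P: "P \<in> carrier_mat N N" and Q: "Q \<in> carrier_mat N N"
    and PQ: "P * Q = 1\<^sub>m N" and QD: "Q * cmat D = T * Q"
    and upper: "upper_triangular T"
    and diag_ne_1: "\<And>m. 0 < m \<Longrightarrow> m < N \<Longrightarrow> T $$ (m, m) \<noteq> 1"
begin

lemma QD_entry: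
  assumes "m < N" "j < N"
  shows "(\<Sum>i<N. Q $$ (m, i) * of_real (D $$ (i, j))) = (\<Sum>l<N. T $$ (m, l) * Q $$ (l, j))"
  using arg_cong[OF QD, of "\<lambda>X. X $$ (m, j)"] assms Q T D
  by (simp add: scalar_prod_def atLeast0LessThan)

lemma PQ_entry:
  assumes "i < N" "j < N"
  shows "(\<Sum>l<N. P $$ (i, l) * Q $$ (l, j)) = (if i = j then 1 else 0)"
  using arg_cong[OF PQ, of "\<lambda>X. X $$ (i, j)"] assms P Q
  by (simp add: scalar_prod_def atLeast0LessThan)

lemma T_below_diag: "l < m \<Longrightarrow> m < N \<Longrightarrow> T $$ (m, l) = 0"
  using upper T by (auto intro: upper_triangularD)

lemma T_row_sum_split:
  assumes "m < N"
  shows "(\<Sum>l<N. T $$ (m, l) * f l) = T $$ (m, m) * f m + (\<Sum>l\<in>{m<..<N}. T $$ (m, l) * f l)"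
proof -
  have split: "{..<N} = {..<m} \<union> ({m} \<union> {m<..<N})" using assms by auto
  have "(\<Sum>l<N. T $$ (m, l) * f l)
      = (\<Sum>l<m. T $$ (m, l) * f l) + (T $$ (m, m) * f m + (\<Sum>l\<in>{m<..<N}. T $$ (m, l) * f l))"
    unfolding split by (subst sum.union_disjoint, auto)+
  then show ?thesis using T_below_diag assms by simp
qed

text \<open>The vector Q 1 is fixed by T, because D 1 = 1; as 1 is a simple diagonal entry of the
  triangular matrix T, this forces Q 1 to be supported on the first coordinate.\<close>

lemma Q_row_sum_zero:
  assumes "0 < m" "m < N"
  shows "(\<Sum>j<N. Q $$ (m, j)) = 0"
  using assms
proof (induction "N - m" arbitrary: m rule: less_induct)
  case less
  define w where "w l = (\<Sum>j<N. Q $$ (l, j))" for l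
  have "(\<Sum>l<N. T $$ (m, l) * w l) = (\<Sum>j<N. \<Sum>l<N. T $$ (m, l) * Q $$ (l, j))"
    unfolding w_def sum_distrib_left by (rule sum.swap)
  also have "\<dots> = (\<Sum>j<N. \<Sum>i<N. Q $$ (m, i) * of_real (D $$ (i, j)))"
    using QD_entry[OF less.prems(2)] by simp
  also have "\<dots> = (\<Sum>i<N. Q $$ (m, i) * of_real (\<Sum>j<N. D $$ (i, j)))"
    by (subst sum.swap) (simp add: sum_distrib_left)
  also have "\<dots> = w m"
    unfolding w_def using row_sum by simp
  moreover have "(\<Sum>l\<in>{m<..<N}. T $$ (m, l) * w l) = 0"
    using less by (intro sum.neutral) (auto simp: w_def)
  ultimately have "T $$ (m, m) * w m = w m"
    using T_row_sum_split[OF less.prems(2), of w] by simp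
  then have "(T $$ (m, m) - 1) * w m = 0" by (simp add: algebra_simps)
  then show ?case using diag_ne_1[OF less.prems] by (simp add: w_def)
qed

lemma P_first_column_const:
  assumes "i < N" "j < N"
  shows "P $$ (i, 0) = P $$ (j, 0)"
proof -
  have "P $$ (i, 0) * (\<Sum>l<N. Q $$ (0, l)) = 1" if "i < N" for i
  proof -
    have "(\<Sum>m<N. P $$ (i, m) * (\<Sum>l<N. Q $$ (m, l))) = (\<Sum>l<N. \<Sum>m<N. P $$ (i, m) * Q $$ (m, l))"
      unfolding sum_distrib_left by (rule sum.swap)
    also have "\<dots> = 1"
      using PQ_entry[OF that] that by simp
    finally have "(\<Sum>m<N. P $$ (i, m) * (\<Sum>l<N. Q $$ (m, l))) = 1" .
    moreover have "(\<Sum>m<N. P $$ (i, m) * (\<Sum>l<N. Q $$ (m, l)))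
        = P $$ (i, 0) * (\<Sum>l<N. Q $$ (0, l)) + (\<Sum>m\<in>{..<N} - {0}. P $$ (i, m) * (\<Sum>l<N. Q $$ (m, l)))"
      using that by (subst sum.remove[of _ 0]) auto
    moreover have "(\<Sum>m\<in>{..<N} - {0}. P $$ (i, m) * (\<Sum>l<N. Q $$ (m, l))) = 0"
      using Q_row_sum_zero by (intro sum.neutral) auto
    ultimately show ?thesis by simp
  qed
  from this[OF assms(1)] this[OF assms(2)] show ?thesis
    by (metis mult_cancel_right mult_zero_left zero_neq_one)
qed

lemma modal_laplacian:
  fixes g :: "nat \<Rightarrow> real"
  assumes m: "m < N"
  shows "(\<Sum>i<N. Q $$ (m, i) * of_real (\<Sum>j<N. D $$ (i, j) * (g i - g j)))
    = (1 - T $$ (m, m)) * (\<Sum>i<N. Q $$ (m, i) * of_real (g i))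
      - (\<Sum>l\<in>{m<..<N}. T $$ (m, l) * (\<Sum>i<N. Q $$ (l, i) * of_real (g i)))"
proof -
  define F where "F l = (\<Sum>i<N. Q $$ (l, i) * of_real (g i))" for l
  have "(\<Sum>j<N. D $$ (i, j) * (g i - g j)) = g i - (\<Sum>j<N. D $$ (i, j) * g j)" if "i < N" for i
    using row_sum[OF that] by (simp add: right_diff_distrib sum_subtractf flip: sum_distrib_right)
  then have "(\<Sum>i<N. Q $$ (m, i) * of_real (\<Sum>j<N. D $$ (i, j) * (g i - g j)))
      = F m - (\<Sum>i<N. \<Sum>j<N. Q $$ (m, i) * of_real (D $$ (i, j)) * of_real (g j))"
    unfolding F_def by (simp add: right_diff_distrib sum_subtractf sum_distrib_left mult.assoc)
  also have "(\<Sum>i<N. \<Sum>j<N. Q $$ (m, i) * of_real (D $$ (i, j)) * of_real (g j))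
      = (\<Sum>j<N. (\<Sum>i<N. Q $$ (m, i) * of_real (D $$ (i, j))) * of_real (g j))"
    by (subst sum.swap) (simp add: sum_distrib_right)
  also have "\<dots> = (\<Sum>j<N. \<Sum>l<N. T $$ (m, l) * Q $$ (l, j) * of_real (g j))"
    using QD_entry[OF m] by (simp add: sum_distrib_right)
  also have "\<dots> = (\<Sum>l<N. T $$ (m, l) * F l)"
    unfolding F_def sum_distrib_left by (subst sum.swap) (simp add: mult.assoc)
  finally show ?thesis
    unfolding T_row_sum_split[OF m] F_def by (simp add: algebra_simps)
qed

end

lemma stochastic_triangularization_exists:
  assumes D: "row_stochastic N D"
    and char_poly: "char_poly (cmat D) = [:-1, 1:] * (\<Prod>z\<leftarrow>lams. [:-z, 1:])"
    and lams: "\<forall>z\<in>set lams. cmod z < 1"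
  obtains T P Q where "stochastic_triangularization N D T P Q"
    and "\<And>m. 0 < m \<Longrightarrow> m < N \<Longrightarrow> T $$ (m, m) \<in> set lams"
proof -
  have DN: "D \<in> carrier_mat N N" using D by (simp add: row_stochastic_def)
  obtain T P Q where T: "T \<in> carrier_mat N N" and tri: "P \<in> carrier_mat N N" "Q \<in> carrier_mat N N"
      "P * Q = 1\<^sub>m N" "Q * cmat D = T * Q" "upper_triangular T" and diag: "diag_mat T = 1 # lams"
    using similar_upper_triangular[of "cmat D" N "1 # lams"] DN char_poly by auto
  have T_diag: "T $$ (m, m) \<in> set lams" if "0 < m" "m < N" for m
  proof -
    have "T $$ (m, m) = (1 # lams) ! m" and "length (1 # lams) = N"
      using arg_cong[OF diag, of "\<lambda>xs. xs ! m"] arg_cong[OF diag, of length] T that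
      by (auto simp: diag_mat_def)
    then show ?thesis using that by (cases m) auto
  qed
  have "stochastic_triangularization N D T P Q"
  proof unfold_locales
    show "T $$ (m, m) \<noteq> 1" if "0 < m" "m < N" for m
      using lams T_diag[OF that] by auto
  qed (use D T tri in \<open>auto simp: row_stochastic_def\<close>)
  then show ?thesis using T_diag by (rule that)
qed

locale consensus_error = stochastic_triangularization +
  fixes n :: nat and A LC :: "real mat" and e :: "nat \<Rightarrow> nat \<Rightarrow> nat \<Rightarrow> real"
  assumes A: "A \<in> carrier_mat n n" and LC: "LC \<in> carrier_mat n n"
    and error_step: "\<And>i k s. i < N \<Longrightarrow> s < n \<Longrightarrow> e i (Suc k) s =
      (\<Sum>t<n. A $$ (s, t) * e i k t) + (\<Sum>t<n. LC $$ (s, t) * (\<Sum>j<N. D $$ (i, j) * (e i k t - e j k t)))"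
    and modes_stable: "\<And>m. 0 < m \<Longrightarrow> m < N \<Longrightarrow>
      schur_stable (cmat A + (1 - T $$ (m, m)) \<cdot>\<^sub>m cmat LC)"
begin

text \<open>e i k s is component s of the error of agent i at time k.\<close>

definition modal_error :: "nat \<Rightarrow> nat \<Rightarrow> complex vec" where
  "modal_error m k = vec n (\<lambda>s. \<Sum>i<N. Q $$ (m, i) * of_real (e i k s))"

lemma modal_error_carrier [simp]: "modal_error m k \<in> carrier_vec n"
  by (simp add: modal_error_def)

lemma modal_error_step:
  assumes m: "m < N"
  shows "modal_error m (Suc k) = (cmat A + (1 - T $$ (m, m)) \<cdot>\<^sub>m cmat LC) *\<^sub>v modal_error m k
    + cmat LC *\<^sub>v vec n (\<lambda>t. - (\<Sum>l\<in>{m<..<N}. T $$ (m, l) * modal_error l k $ t))"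
proof (rule eq_vecI)
  fix s assume "s < dim_vec ((cmat A + (1 - T $$ (m, m)) \<cdot>\<^sub>m cmat LC) *\<^sub>v modal_error m k
    + cmat LC *\<^sub>v vec n (\<lambda>t. - (\<Sum>l\<in>{m<..<N}. T $$ (m, l) * modal_error l k $ t)))"
  then have s: "s < n" using LC by simp
  define W where "W i t = (\<Sum>j<N. D $$ (i, j) * (e i k t - e j k t))" for i t
  have "modal_error m (Suc k) $ s
      = (\<Sum>i<N. Q $$ (m, i) * of_real (\<Sum>t<n. A $$ (s, t) * e i k t))
      + (\<Sum>i<N. Q $$ (m, i) * of_real (\<Sum>t<n. LC $$ (s, t) * W i t))"
    using s by (simp add: modal_error_def error_step W_def distrib_left sum.distrib)
  also have "\<dots> = (\<Sum>t<n. of_real (A $$ (s, t)) * modal_error m k $ t)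
      + (\<Sum>t<n. of_real (LC $$ (s, t)) * ((1 - T $$ (m, m)) * modal_error m k $ t
          - (\<Sum>l\<in>{m<..<N}. T $$ (m, l) * modal_error l k $ t)))"
    unfolding sum_mult_of_real_sum W_def modal_laplacian[OF m] by (simp add: modal_error_def)
  also have "\<dots> = ((cmat A + (1 - T $$ (m, m)) \<cdot>\<^sub>m cmat LC) *\<^sub>v modal_error m k
    + cmat LC *\<^sub>v vec n (\<lambda>t. - (\<Sum>l\<in>{m<..<N}. T $$ (m, l) * modal_error l k $ t))) $ s"
  proof -
    have M: "cmat A + (1 - T $$ (m, m)) \<cdot>\<^sub>m cmat LC \<in> carrier_mat n n" and cLC: "cmat LC \<in> carrier_mat n n"
      using A LC by auto
    have "(\<Sum>t<n. of_real (A $$ (s, t)) * modal_error m k $ t)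
        + (\<Sum>t<n. of_real (LC $$ (s, t)) * ((1 - T $$ (m, m)) * modal_error m k $ t
          - (\<Sum>l\<in>{m<..<N}. T $$ (m, l) * modal_error l k $ t)))
      = (\<Sum>t<n. (of_real (A $$ (s, t)) + (1 - T $$ (m, m)) * of_real (LC $$ (s, t))) * modal_error m k $ t)
        + (\<Sum>t<n. of_real (LC $$ (s, t)) * - (\<Sum>l\<in>{m<..<N}. T $$ (m, l) * modal_error l k $ t))"
      by (simp only: sum.distrib[symmetric]) (intro sum.cong refl, simp add: algebra_simps)
    then show ?thesis
      using A LC s
      by (simp del: index_mult_mat_vec add: index_mult_mat_vec_sum[OF M] index_mult_mat_vec_sum[OF cLC])
  qed
  finally show "modal_error m (Suc k) $ s = \<dots>" .
qed (use LC in simp)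

lemma modal_error_tendsto_zero:
  assumes "0 < m" "m < N" "s < n"
  shows "(\<lambda>k. modal_error m k $ s) \<longlonglongrightarrow> 0"
  using assms
proof (induction "N - m" arbitrary: m s rule: less_induct)
  case less
  show ?case
  proof (rule schur_stable_input_to_state[where y = "modal_error m"
        and u = "\<lambda>k. cmat LC *\<^sub>v vec n (\<lambda>t. - (\<Sum>l\<in>{m<..<N}. T $$ (m, l) * modal_error l k $ t))"])
    show "(\<lambda>k. (cmat LC *\<^sub>v vec n (\<lambda>t. - (\<Sum>l\<in>{m<..<N}. T $$ (m, l) * modal_error l k $ t))) $ j)
        \<longlonglongrightarrow> 0" if "j < n" for j
    proof (rule mult_mat_vec_tendsto_zero[where m = n])
      show "(\<lambda>k. vec n (\<lambda>t. - (\<Sum>l\<in>{m<..<N}. T $$ (m, l) * modal_error l k $ t)) $ t) \<longlonglongrightarrow> 0"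
        if "t < n" for t
        using less that by (auto intro!: tendsto_minus_cancel_left[THEN iffD1] tendsto_null_sum tendsto_mult_right_zero)
    qed (use LC that in auto)
  qed (use A LC less modes_stable modal_error_step in auto)
qed

lemma error_modal_expansion:
  assumes "i < N" "s < n"
  shows "of_real (e i k s) = (\<Sum>m<N. P $$ (i, m) * modal_error m k $ s)"
proof -
  have "(\<Sum>m<N. P $$ (i, m) * modal_error m k $ s)
      = (\<Sum>m<N. \<Sum>j<N. P $$ (i, m) * Q $$ (m, j) * of_real (e j k s))"
    using assms(2) by (simp add: modal_error_def sum_distrib_left mult.assoc)
  also have "\<dots> = (\<Sum>j<N. (\<Sum>m<N. P $$ (i, m) * Q $$ (m, j)) * of_real (e j k s))"
    by (subst sum.swap) (simp add: sum_distrib_right)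
  also have "\<dots> = (\<Sum>j<N. if i = j then of_real (e j k s) else 0)"
    using PQ_entry[OF assms(1)] by (intro sum.cong) auto
  also have "\<dots> = of_real (e i k s)"
    using assms(1) by simp
  finally show ?thesis by simp
qed

lemma error_disagreement_tendsto_zero:
  assumes "i < N" "j < N" "s < n"
  shows "(\<lambda>k. e i k s - e j k s) \<longlonglongrightarrow> 0"
proof -
  have "of_real (e i k s - e j k s) = (\<Sum>m\<in>{..<N}. (P $$ (i, m) - P $$ (j, m)) * modal_error m k $ s)" for k
    using error_modal_expansion[of i s k] error_modal_expansion[of j s k] assms
    by (simp add: sum_subtractf left_diff_distrib)
  moreover have "(\<lambda>k. \<Sum>m<N. (P $$ (i, m) - P $$ (j, m)) * modal_error m k $ s) \<longlonglongrightarrow> 0"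
  proof (intro tendsto_null_sum)
    fix m assume "m \<in> {..<N}"
    then show "(\<lambda>k. (P $$ (i, m) - P $$ (j, m)) * modal_error m k $ s) \<longlonglongrightarrow> 0"
      using P_first_column_const[OF assms(1,2)] modal_error_tendsto_zero[of m s] assms(3)
      by (cases "m = 0") (auto intro: tendsto_mult_right_zero)
  qed
  ultimately have "(\<lambda>k. of_real (e i k s - e j k s) :: complex) \<longlonglongrightarrow> of_real 0" by simp
  then show ?thesis by (simp only: tendsto_of_real_iff)
qed

end

lemma index_vsum: "l < d \<Longrightarrow> vsum d N f $ l = (\<Sum>j<N. f j $ l)"
  unfolding vsum_def by simp

lemma dim_vsum [simp]: "dim_vec (vsum d N f) = d"
  unfolding vsum_def by simp

lemma vsum_carrier [simp]: "vsum d N f \<in> carrier_vec d"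
  unfolding vsum_def by simp

lemma mult_mat_vec_vsum:
  assumes M: "M \<in> carrier_mat m n" and f: "\<And>j. j < N \<Longrightarrow> f j \<in> carrier_vec n"
  shows "M *\<^sub>v vsum n N f = vsum m N (\<lambda>j. M *\<^sub>v f j)"
proof (rule eq_vecI)
  fix l assume "l < dim_vec (vsum m N (\<lambda>j. M *\<^sub>v f j))"
  then have l: "l < m" by simp
  have "(M *\<^sub>v vsum n N f) $ l = (\<Sum>t<n. \<Sum>j<N. M $$ (l, t) * f j $ t)"
    by (simp add: index_mult_mat_vec_sum[OF M vsum_carrier l] index_vsum sum_distrib_left)
  also have "\<dots> = (\<Sum>j<N. \<Sum>t<n. M $$ (l, t) * f j $ t)"
    by (rule sum.swap)
  also have "\<dots> = vsum m N (\<lambda>j. M *\<^sub>v f j) $ l"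
    using f l by (simp add: index_vsum index_mult_mat_vec_sum[OF M])
  finally show "(M *\<^sub>v vsum n N f) $ l = vsum m N (\<lambda>j. M *\<^sub>v f j) $ l" .
qed (use M in \<open>simp add: vsum_def\<close>)

lemma output_innovation_vsum:
  fixes C :: "real mat" and D :: "real mat" and x v :: "nat \<Rightarrow> nat \<Rightarrow> real vec"
  assumes C: "C \<in> carrier_mat q n"
    and carrier: "\<And>j. j < N \<Longrightarrow> x j k \<in> carrier_vec n \<and> v j k \<in> carrier_vec n"
    and i: "i < N"
  shows "vsum q N (\<lambda>j. D $$ (i, j) \<cdot>\<^sub>v (C *\<^sub>v (v i k - v j k)))
      - vsum q N (\<lambda>j. D $$ (i, j) \<cdot>\<^sub>v (C *\<^sub>v x i k - C *\<^sub>v x j k))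
    = vsum q N (\<lambda>j. C *\<^sub>v (D $$ (i, j) \<cdot>\<^sub>v ((v i k - x i k) - (v j k - x j k))))"
proof (rule eq_vecI)
  fix r assume "r < dim_vec (vsum q N (\<lambda>j. C *\<^sub>v (D $$ (i, j) \<cdot>\<^sub>v ((v i k - x i k) - (v j k - x j k)))))"
  then have r: "r < q" by simp
  have "(vsum q N (\<lambda>j. D $$ (i, j) \<cdot>\<^sub>v (C *\<^sub>v (v i k - v j k)))
      - vsum q N (\<lambda>j. D $$ (i, j) \<cdot>\<^sub>v (C *\<^sub>v x i k - C *\<^sub>v x j k))) $ r
    = (\<Sum>j<N. D $$ (i, j) * (C *\<^sub>v (v i k - v j k)) $ r
        - D $$ (i, j) * ((C *\<^sub>v x i k) $ r - (C *\<^sub>v x j k) $ r))"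
    using C r by (simp add: index_vsum sum_subtractf)
  also have "\<dots> = (\<Sum>j<N. (C *\<^sub>v (D $$ (i, j) \<cdot>\<^sub>v ((v i k - x i k) - (v j k - x j k)))) $ r)"
  proof (rule sum.cong)
    fix j assume "j \<in> {..<N}"
    then show "D $$ (i, j) * (C *\<^sub>v (v i k - v j k)) $ r
        - D $$ (i, j) * ((C *\<^sub>v x i k) $ r - (C *\<^sub>v x j k) $ r)
      = (C *\<^sub>v (D $$ (i, j) \<cdot>\<^sub>v ((v i k - x i k) - (v j k - x j k)))) $ r"
      using carrier[OF i] carrier[of j] C r
      by (simp add: mult_mat_vec[OF C] mult_minus_distrib_mat_vec[OF C] right_diff_distrib)
  qed simp
  finally show "(vsum q N (\<lambda>j. D $$ (i, j) \<cdot>\<^sub>v (C *\<^sub>v (v i k - v j k)))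
      - vsum q N (\<lambda>j. D $$ (i, j) \<cdot>\<^sub>v (C *\<^sub>v x i k - C *\<^sub>v x j k))) $ r
    = vsum q N (\<lambda>j. C *\<^sub>v (D $$ (i, j) \<cdot>\<^sub>v ((v i k - x i k) - (v j k - x j k)))) $ r"
    using r by (simp add: index_vsum)
qed simp

lemma observer_error_step:
  fixes A B C K L D :: "real mat" and x v :: "nat \<Rightarrow> nat \<Rightarrow> real vec"
  assumes A: "A \<in> carrier_mat n n" and B: "B \<in> carrier_mat n p"
    and C: "C \<in> carrier_mat q n" and K: "K \<in> carrier_mat p n" and L: "L \<in> carrier_mat n q"
    and carrier: "\<And>j. j < N \<Longrightarrow> x j k \<in> carrier_vec n \<and> v j k \<in> carrier_vec n"
    and x_step: "x i (Suc k) = A *\<^sub>v x i k + B *\<^sub>v (K *\<^sub>v v i k)"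
    and v_step: "v i (Suc k) = (A + B * K) *\<^sub>v v i k
        + L *\<^sub>v (vsum q N (\<lambda>j. D $$ (i, j) \<cdot>\<^sub>v (C *\<^sub>v (v i k - v j k)))
                 - vsum q N (\<lambda>j. D $$ (i, j) \<cdot>\<^sub>v (C *\<^sub>v x i k - C *\<^sub>v x j k)))"
    and i: "i < N" and s: "s < n"
  shows "(v i (Suc k) - x i (Suc k)) $ s = (\<Sum>t<n. A $$ (s, t) * (v i k - x i k) $ t)
    + (\<Sum>t<n. (L * C) $$ (s, t) * (\<Sum>j<N. D $$ (i, j) * ((v i k - x i k) $ t - (v j k - x j k) $ t)))"
proof -
  define \<epsilon> where "\<epsilon> j = v j k - x j k" for j
  define W where "W = vsum n N (\<lambda>j. D $$ (i, j) \<cdot>\<^sub>v (\<epsilon> i - \<epsilon> j))"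
  have \<epsilon>: "\<epsilon> j \<in> carrier_vec n" if "j < N" for j
    using carrier[OF that] by (simp add: \<epsilon>_def)
  have LC: "L * C \<in> carrier_mat n n" and W: "W \<in> carrier_vec n"
    using L C by (auto simp: W_def)
  have "vsum q N (\<lambda>j. D $$ (i, j) \<cdot>\<^sub>v (C *\<^sub>v (v i k - v j k)))
      - vsum q N (\<lambda>j. D $$ (i, j) \<cdot>\<^sub>v (C *\<^sub>v x i k - C *\<^sub>v x j k))
      = vsum q N (\<lambda>j. C *\<^sub>v (D $$ (i, j) \<cdot>\<^sub>v (\<epsilon> i - \<epsilon> j)))"
    unfolding \<epsilon>_def using C carrier i by (rule output_innovation_vsum)
  also have "\<dots> = C *\<^sub>v W"
    unfolding W_def by (subst mult_mat_vec_vsum[OF C]) (use \<epsilon> i in auto)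
  finally have v_step': "v i (Suc k) = (A + B * K) *\<^sub>v v i k + (L * C) *\<^sub>v W"
    using v_step assoc_mult_mat_vec[OF L C W] by simp
  have step: "v i (Suc k) - x i (Suc k) = A *\<^sub>v \<epsilon> i + (L * C) *\<^sub>v W"
  proof -
    have "(A + B * K) *\<^sub>v v i k = A *\<^sub>v v i k + B *\<^sub>v (K *\<^sub>v v i k)"
      using A B K carrier[OF i] by (subst add_mult_distrib_mat_vec[of _ n n]) auto
    moreover have "A *\<^sub>v \<epsilon> i = A *\<^sub>v v i k - A *\<^sub>v x i k"
      using A carrier[OF i] unfolding \<epsilon>_def by (intro mult_minus_distrib_mat_vec) auto
    ultimately show ?thesis
      using x_step v_step' A B K LC W carrier[OF i] by (intro eq_vecI) auto
  qed
  have W_index: "W $ t = (\<Sum>j<N. D $$ (i, j) * (\<epsilon> i $ t - \<epsilon> j $ t))" if "t < n" for t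
    using carrier_vecD[OF \<epsilon>] i that by (simp add: W_def index_vsum)
  have "(v i (Suc k) - x i (Suc k)) $ s = (A *\<^sub>v \<epsilon> i) $ s + ((L * C) *\<^sub>v W) $ s"
    using A L C s unfolding step by (simp del: assoc_mult_mat_vec)
  also have "\<dots> = (\<Sum>t<n. A $$ (s, t) * \<epsilon> i $ t) + (\<Sum>t<n. (L * C) $$ (s, t) * W $ t)"
    by (simp only: index_mult_mat_vec_sum[OF A \<epsilon>[OF i] s] index_mult_mat_vec_sum[OF LC W s])
  finally show ?thesis
    using W_index by (simp add: \<epsilon>_def)
qed

theorem corollary1:
  fixes n p q N :: nat
    and A B C K L D :: "real mat"
    and lams :: "complex list"
  assumes A: "A \<in> carrier_mat n n" and B: "B \<in> carrier_mat n p"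
    and C: "C \<in> carrier_mat q n" and K: "K \<in> carrier_mat p n"
    and L: "L \<in> carrier_mat n q"
    and stabK: "schur_stable (cmat (A + B * K))"
    and D: "row_stochastic N D" and G: "has_spanning_tree N D"
    and eigs: "char_poly (cmat D) = [:-1, 1:] * (\<Prod>z\<leftarrow>lams. [:-z, 1:])"
    and eigs_lt: "\<forall>z\<in>set lams. cmod z < 1"
    and inS: "\<forall>z\<in>set lams. z \<in> consensus_region A L C"
  shows "\<forall>x v :: nat \<Rightarrow> nat \<Rightarrow> real vec.
     (\<forall>i<N. \<forall>k. x i k \<in> carrier_vec n \<and> v i k \<in> carrier_vec n) \<and>
     (\<forall>i<N. \<forall>k. x i (Suc k) = A *\<^sub>v x i k + B *\<^sub>v (K *\<^sub>v v i k)) \<and>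
     (\<forall>i<N. \<forall>k. v i (Suc k) =
        (A + B * K) *\<^sub>v v i k
        + L *\<^sub>v (vsum q N (\<lambda>j. D $$ (i,j) \<cdot>\<^sub>v (C *\<^sub>v (v i k - v j k)))
                 - vsum q N (\<lambda>j. D $$ (i,j) \<cdot>\<^sub>v (C *\<^sub>v x i k - C *\<^sub>v x j k))))
     \<longrightarrow> (\<forall>i<N. \<forall>j<N. (\<lambda>k. vnorm (x i k - x j k)) \<longlonglongrightarrow> 0)"
proof (intro allI impI, elim conjE)
  fix x v :: "nat \<Rightarrow> nat \<Rightarrow> real vec" and i j :: nat
  assume carrier: "\<forall>i<N. \<forall>k. x i k \<in> carrier_vec n \<and> v i k \<in> carrier_vec n"
    and x_step: "\<forall>i<N. \<forall>k. x i (Suc k) = A *\<^sub>v x i k + B *\<^sub>v (K *\<^sub>v v i k)"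
    and v_step: "\<forall>i<N. \<forall>k. v i (Suc k) = (A + B * K) *\<^sub>v v i k
        + L *\<^sub>v (vsum q N (\<lambda>j. D $$ (i,j) \<cdot>\<^sub>v (C *\<^sub>v (v i k - v j k)))
                 - vsum q N (\<lambda>j. D $$ (i,j) \<cdot>\<^sub>v (C *\<^sub>v x i k - C *\<^sub>v x j k)))"
    and ij: "i < N" "j < N"
  obtain T P Q where tri: "stochastic_triangularization N D T P Q"
    and T_diag: "\<And>m. 0 < m \<Longrightarrow> m < N \<Longrightarrow> T $$ (m, m) \<in> set lams"
    using stochastic_triangularization_exists[OF D eigs eigs_lt] by blast
  interpret consensus_error N D T P Q n A "L * C" "\<lambda>i k s. (v i k - x i k) $ s"
  proof (intro consensus_error.intro[OF tri] consensus_error_axioms.intro)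
    show "schur_stable (cmat A + (1 - T $$ (m, m)) \<cdot>\<^sub>m cmat (L * C))" if "0 < m" "m < N" for m
      unfolding of_real_hom.mat_hom_mult[OF L C]
      using inS T_diag[OF that] by (simp add: consensus_region_def)
    show "(v i (Suc k) - x i (Suc k)) $ s = (\<Sum>t<n. A $$ (s, t) * (v i k - x i k) $ t)
      + (\<Sum>t<n. (L * C) $$ (s, t) * (\<Sum>j<N. D $$ (i, j) * ((v i k - x i k) $ t - (v j k - x j k) $ t)))"
      if "i < N" "s < n" for i k s
      using observer_error_step[OF A B C K L] carrier x_step v_step that by blast
  qed (use A L C in auto)
  show "(\<lambda>k. vnorm (x i k - x j k)) \<longlonglongrightarrow> 0"
    using carrier x_step error_disagreement_tendsto_zero ij
    by (intro vnorm_tendsto_zero state_difference_tendsto_zero[OF A B K stabK]) auto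
qed

end
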